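(* Let $A$ be a real symmetric matrix, normalized so that the minimal entry of every row and every column is $0$, and suppose $A$ has symmetric tropical rank two. Then after possibly a diagonal permutation, $A$ has the block structure $$\begin{pmatrix}\mathbf 0&\mathbf 0&\mathbf 0&\mathbf 0&\mathbf 0\\ \mathbf 0&B_1&\mathbf 0&\mathbf 0&\mathbf 0\\ \mathbf 0&\mathbf 0&B_2&\mathbf 0&\mathbf 0\\ \mathbf 0&\mathbf 0&\mathbf 0&\mathbf 0&C\\ \mathbf 0&\mathbf 0&\mathbf 0&C^{T}&\mathbf 0\end{pmatrix},$$ where $B_1,B_2$ are symmetric with all entries positive, $C$ has all entries nonnegative and no column consisting entirely of zeros, and each $\mathbf 0$ is a zero matrix of appropriate size; any of the blocks (the initial block of all-zero rows/columns, $B_1$, $B_2$, $C$) may have size zero. Moreover, $A$ is neither the zero matrix nor a matrix consisting of just one of the positive blocks $B_1$ or $B_2$.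
   Context: A diagonal permutation of a square matrix permutes its rows and its columns by the same permutation. For an $r\times r$ submatrix of a real symmetric matrix $A$ with row index set $I$ and column index set $J$, each bijection $\rho:I\to J$ gives a monomial $\prod_{i\in I}X_{i,\rho(i)}$ in commuting variables subject to $X_{i,j}=X_{j,i}$, with value $\sum_{i\in I}A_{i,\rho(i)}$; the submatrix is symmetrically tropically singular if the minimum value is attained by at least two distinct monomials. The symmetric tropical rank of $A$ is the largest $r$ such that $A$ has an $r\times r$ submatrix that is not symmetrically tropically singular. *)

theory Defs
  imports Complex_Main "HOL-Library.FuncSet" "HOL-Library.Multiset"
begin

text \<open>Matrices are functions nat => nat => real, with an explicit dimension n
  (indices 0..n-1).\<close>

definition bijs :: "nat set \<Rightarrow> nat set \<Rightarrow> (nat \<Rightarrow> nat) set" where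
  "bijs I J = {\<rho> \<in> I \<rightarrow>\<^sub>E J. bij_betw \<rho> I J}"

text \<open>The monomial prod_{i in I} X_{i,rho(i)} in commuting variables with
  X_{i,j} = X_{j,i}: the variable X_{i,j} is indexed by the unordered pair {i,j},
  and a monomial is the multiset of its variables.\<close>
definition monomial :: "nat set \<Rightarrow> (nat \<Rightarrow> nat) \<Rightarrow> nat set multiset" where
  "monomial I \<rho> = image_mset (\<lambda>i. {i, \<rho> i}) (mset_set I)"

definition mon_value :: "(nat \<Rightarrow> nat \<Rightarrow> real) \<Rightarrow> nat set \<Rightarrow> (nat \<Rightarrow> nat) \<Rightarrow> real" where
  "mon_value A I \<rho> = (\<Sum>i\<in>I. A i (\<rho> i))"

definition sym_trop_singular :: "(nat \<Rightarrow> nat \<Rightarrow> real) \<Rightarrow> nat set \<Rightarrow> nat set \<Rightarrow> bool" where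
  "sym_trop_singular A I J \<longleftrightarrow>
     (\<exists>\<rho>1\<in>bijs I J. \<exists>\<rho>2\<in>bijs I J.
        (\<forall>\<tau>\<in>bijs I J. mon_value A I \<rho>1 \<le> mon_value A I \<tau>) \<and>
        (\<forall>\<tau>\<in>bijs I J. mon_value A I \<rho>2 \<le> mon_value A I \<tau>) \<and>
        monomial I \<rho>1 \<noteq> monomial I \<rho>2)"

definition sym_trop_rank :: "nat \<Rightarrow> (nat \<Rightarrow> nat \<Rightarrow> real) \<Rightarrow> nat" where
  "sym_trop_rank n A = (GREATEST r. \<exists>I J. I \<subseteq> {..<n} \<and> J \<subseteq> {..<n} \<and>
      card I = r \<and> card J = r \<and> \<not> sym_trop_singular A I J)"

text \<open>Block index of position i for block sizes k0 (zero block), k1 (B1), k2 (B2),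
  k3 (rows of C), and the rest (columns of C).\<close>
definition blk :: "nat \<Rightarrow> nat \<Rightarrow> nat \<Rightarrow> nat \<Rightarrow> nat \<Rightarrow> nat" where
  "blk k0 k1 k2 k3 i =
     (if i < k0 then 0 else if i < k0 + k1 then 1 else if i < k0 + k1 + k2 then 2
      else if i < k0 + k1 + k2 + k3 then 3 else 4)"

definition sym_block_form ::
  "nat \<Rightarrow> (nat \<Rightarrow> nat \<Rightarrow> real) \<Rightarrow> nat \<Rightarrow> nat \<Rightarrow> nat \<Rightarrow> nat \<Rightarrow> nat \<Rightarrow> bool" where
  "sym_block_form n B k0 k1 k2 k3 k4 \<longleftrightarrow>
     k0 + k1 + k2 + k3 + k4 = n \<and>
     (\<forall>i<n. \<forall>j<n.
        (let bi = blk k0 k1 k2 k3 i; bj = blk k0 k1 k2 k3 j in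
          if (bi = 1 \<and> bj = 1) \<or> (bi = 2 \<and> bj = 2) then B i j > 0
          else if bi = 3 \<and> bj = 4 then B i j \<ge> 0 \<and> B j i = B i j
          else if bi = 4 \<and> bj = 3 then B i j \<ge> 0
          else B i j = 0)) \<and>
     (\<forall>j. k0 + k1 + k2 + k3 \<le> j \<and> j < n \<longrightarrow>
        (\<exists>i. k0 + k1 + k2 \<le> i \<and> i < k0 + k1 + k2 + k3 \<and> B i j \<noteq> 0))"

end

theory Submission
  imports Defs
begin

text \<open>A \<open>3 \<times> 3\<close> submatrix of a nonnegative matrix with a unique zero transversal is
  symmetrically tropically nonsingular. For rank two there is no such submatrix, and together
  with the zero in every row this forces the zero pattern: an entry between a positive and a
  zero diagonal entry vanishes; on the rows with positive diagonal, positivity of entries is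
  an equivalence relation with at most two classes (the blocks \<open>B\<^sub>1\<close>, \<open>B\<^sub>2\<close>); on the
  nonzero rows with zero diagonal, the positive entries form a triangle-free graph in which
  paths of length three close up, i.e. a disjoint union of complete bipartite graphs, whose
  two sides give the rows and columns of \<open>C\<close>. Rank two also excludes the zero matrix.\<close>

lemma not_sym_trop_singular_if_unique_zero_monomial:
  fixes A :: "nat \<Rightarrow> nat \<Rightarrow> real"
  assumes "finite I" and nonneg: "\<forall>i\<in>I. \<forall>j\<in>J. 0 \<le> A i j"
    and \<rho>: "\<rho> \<in> bijs I J" and \<rho>_zero: "\<forall>i\<in>I. A i (\<rho> i) = 0"
    and unique: "\<And>\<tau>. \<tau> \<in> bijs I J \<Longrightarrow> \<forall>i\<in>I. A i (\<tau> i) = 0 \<Longrightarrow> monomial I \<tau> = monomial I \<rho>"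
  shows "\<not> sym_trop_singular A I J"
proof -
  have "monomial I \<tau> = monomial I \<rho>"
    if \<tau>: "\<tau> \<in> bijs I J" and min: "\<forall>\<sigma>\<in>bijs I J. mon_value A I \<tau> \<le> mon_value A I \<sigma>" for \<tau>
  proof -
    have terms_nonneg: "\<forall>i\<in>I. 0 \<le> A i (\<tau> i)"
      using \<tau> nonneg by (auto simp: bijs_def)
    have "mon_value A I \<tau> \<le> mon_value A I \<rho>"
      using min \<rho> by blast
    also have "\<dots> = 0"
      using \<rho>_zero by (simp add: mon_value_def)
    finally have "(\<Sum>i\<in>I. A i (\<tau> i)) = 0"
      using terms_nonneg by (simp add: mon_value_def antisym sum_nonneg)
    then have "\<forall>i\<in>I. A i (\<tau> i) = 0"
      using sum_nonneg_eq_0_iff[OF \<open>finite I\<close>, of "\<lambda>i. A i (\<tau> i)"] terms_nonneg by simp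
    then show ?thesis
      using unique \<tau> by blast
  qed
  then show ?thesis
    unfolding sym_trop_singular_def by metis
qed

lemma sym_trop_rank_ge:
  assumes "I \<subseteq> {..<n}" "J \<subseteq> {..<n}" "card I = r" "card J = r" "\<not> sym_trop_singular A I J"
  shows "r \<le> sym_trop_rank n A"
proof -
  let ?P = "\<lambda>r. \<exists>I J. I \<subseteq> {..<n} \<and> J \<subseteq> {..<n} \<and> card I = r \<and> card J = r \<and>
    \<not> sym_trop_singular A I J"
  have "?P r"
    using assms by blast
  then have "r \<le> Greatest ?P"
    by (rule Greatest_le_nat[where b = n]) (metis card_lessThan card_mono finite_lessThan)
  then show ?thesis
    unfolding sym_trop_rank_def .
qed

lemma sym_trop_rank_attained:
  "\<exists>I J. I \<subseteq> {..<n} \<and> J \<subseteq> {..<n} \<and> card I = sym_trop_rank n A \<and> card J = sym_trop_rank n A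
     \<and> \<not> sym_trop_singular A I J"
proof -
  let ?P = "\<lambda>r. \<exists>I J. I \<subseteq> {..<n} \<and> J \<subseteq> {..<n} \<and> card I = r \<and> card J = r \<and>
    \<not> sym_trop_singular A I J"
  have "\<not> sym_trop_singular A {} {}"
    by (simp add: sym_trop_singular_def monomial_def)
  then have "?P 0"
    by (intro exI[of _ "{}"]) simp
  then have "?P (Greatest ?P)"
    by (rule GreatestI_nat[where b = n]) (metis card_lessThan card_mono finite_lessThan)
  then show ?thesis
    unfolding sym_trop_rank_def .
qed

lemma sym_trop_singular_zero_2x2:
  fixes A :: "nat \<Rightarrow> nat \<Rightarrow> real"
  assumes "card I = 2" "card J = 2" and zero: "\<forall>i\<in>I. \<forall>j\<in>J. A i j = 0"
  shows "sym_trop_singular A I J"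
proof -
  obtain a b where I: "I = {a, b}" "a \<noteq> b"
    using \<open>card I = 2\<close> card_2_iff by metis
  obtain c d where J: "J = {c, d}" "c \<noteq> d"
    using \<open>card J = 2\<close> card_2_iff by metis
  let ?\<rho>1 = "\<lambda>x. if x = a then c else if x = b then d else undefined"
  let ?\<rho>2 = "\<lambda>x. if x = a then d else if x = b then c else undefined"
  have bijs: "?\<rho>1 \<in> bijs I J" "?\<rho>2 \<in> bijs I J"
    using I J unfolding bijs_def bij_betw_def inj_on_def by (auto split: if_splits)
  have value_zero: "mon_value A I \<tau> = 0" if "\<tau> \<in> bijs I J" for \<tau>
    using that zero unfolding bijs_def mon_value_def by (auto intro!: sum.neutral dest: PiE_mem)
  have "{a, c} \<in># monomial I ?\<rho>1"
    using I by (simp add: monomial_def)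
  moreover have "{a, c} \<notin># monomial I ?\<rho>2"
    using I J by (auto simp: monomial_def doubleton_eq_iff)
  ultimately have "monomial I ?\<rho>1 \<noteq> monomial I ?\<rho>2"
    by metis
  then show ?thesis
    unfolding sym_trop_singular_def using bijs value_zero by (intro bexI[of _ ?\<rho>1] bexI[of _ ?\<rho>2]) auto
qed

lemma ex_less_all_iff_not_ex_less_all:
  fixes X Y :: "'a::linorder set"
  assumes "finite X" "finite Y" "X \<inter> Y = {}" "X \<union> Y \<noteq> {}"
  shows "(\<exists>c\<in>X. \<forall>y\<in>Y. c < y) \<longleftrightarrow> \<not> (\<exists>c\<in>Y. \<forall>x\<in>X. c < x)"
proof
  assume "\<exists>c\<in>X. \<forall>y\<in>Y. c < y"
  then show "\<not> (\<exists>c\<in>Y. \<forall>x\<in>X. c < x)"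
    by force
next
  assume no_Y: "\<not> (\<exists>c\<in>Y. \<forall>x\<in>X. c < x)"
  define m where "m = Min (X \<union> Y)"
  have m_mem: "m \<in> X \<union> Y"
    unfolding m_def using assms by (intro Min_in) auto
  have m_le: "m \<le> z" if "z \<in> X \<union> Y" for z
    unfolding m_def using assms that by (intro Min_le) auto
  have m_less: "m < z" if "z \<in> X \<union> Y" "z \<noteq> m" for z
    using m_le that by (simp add: order_le_neq_trans)
  show "\<exists>c\<in>X. \<forall>y\<in>Y. c < y"
  proof (cases "m \<in> X")
    case True
    then show ?thesis
      using m_less assms(3) by blast
  next
    case False
    then show ?thesis
      using m_mem m_less no_Y by blast
  qed
qed

lemma bijs_triple:
  assumes "distinct [a, b, c]" "distinct [d, e, g]"
  shows "(\<lambda>x. if x = a then d else if x = b then e else if x = c then g else undefined)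
    \<in> bijs {a, b, c} {d, e, g}"
  using assms unfolding bijs_def bij_betw_def inj_on_def by (auto split: if_splits)

lemma bijs_tripleD:
  assumes "\<tau> \<in> bijs {a, b, c} J"
  shows "\<tau> a \<in> J" "\<tau> b \<in> J" "\<tau> c \<in> J" "inj_on \<tau> {a, b, c}"
    and "\<And>x. x \<notin> {a, b, c} \<Longrightarrow> \<tau> x = undefined"
  using assms unfolding bijs_def bij_betw_def by (auto simp: PiE_def extensional_def)

lemma monomial_triple:
  assumes "distinct [a, b, c]"
  shows "monomial {a, b, c} \<tau> = {#{a, \<tau> a}, {b, \<tau> b}, {c, \<tau> c}#}"
  using assms by (simp add: monomial_def)

locale normalized_sym_rank_le_2 =
  fixes n :: nat and A :: "nat \<Rightarrow> nat \<Rightarrow> real"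
  assumes symm: "\<And>i j. i < n \<Longrightarrow> j < n \<Longrightarrow> A i j = A j i"
    and nonneg: "\<And>i j. i < n \<Longrightarrow> j < n \<Longrightarrow> 0 \<le> A i j"
    and row_zero: "\<And>i. i < n \<Longrightarrow> \<exists>j<n. A i j = 0"
    and singular_3x3: "\<And>I J. I \<subseteq> {..<n} \<Longrightarrow> J \<subseteq> {..<n} \<Longrightarrow> card I = 3 \<Longrightarrow> card J = 3 \<Longrightarrow>
      sym_trop_singular A I J"
begin

lemma no_unique_zero_transversal:
  assumes range: "a < n" "b < n" "c < n" "d < n" "e < n" "g < n"
    and rows: "distinct [a, b, c]" and cols: "distinct [d, e, g]"
    and zero: "A a d = 0" "A b e = 0" "A c g = 0"
    and unique: "\<And>x y z. x \<in> {d, e, g} \<Longrightarrow> y \<in> {d, e, g} \<Longrightarrow> z \<in> {d, e, g} \<Longrightarrow>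
      distinct [x, y, z] \<Longrightarrow> A a x = 0 \<Longrightarrow> A b y = 0 \<Longrightarrow> A c z = 0 \<Longrightarrow> x = d \<and> y = e \<and> z = g"
  shows False
proof -
  define \<rho> where "\<rho> x = (if x = a then d else if x = b then e else if x = c then g else undefined)"
    for x
  have \<rho>: "\<rho> \<in> bijs {a, b, c} {d, e, g}"
    unfolding \<rho>_def by (rule bijs_triple[OF rows cols])
  have "\<not> sym_trop_singular A {a, b, c} {d, e, g}"
  proof (rule not_sym_trop_singular_if_unique_zero_monomial[OF _ _ \<rho>])
    show "\<forall>i\<in>{a, b, c}. \<forall>j\<in>{d, e, g}. 0 \<le> A i j"
      using range nonneg by auto
    show "\<forall>i\<in>{a, b, c}. A i (\<rho> i) = 0"
      using zero rows by (auto simp: \<rho>_def)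
    show "monomial {a, b, c} \<tau> = monomial {a, b, c} \<rho>"
      if \<tau>: "\<tau> \<in> bijs {a, b, c} {d, e, g}" and \<tau>_zero: "\<forall>i\<in>{a, b, c}. A i (\<tau> i) = 0" for \<tau>
    proof -
      note \<tau>_facts = bijs_tripleD[OF \<tau>]
      have "distinct [\<tau> a, \<tau> b, \<tau> c]"
        using \<tau>_facts(4) rows by (auto simp: inj_on_def)
      then have "\<tau> a = d \<and> \<tau> b = e \<and> \<tau> c = g"
        using \<tau>_zero \<tau>_facts(1-3) by (intro unique) auto
      then have "\<tau> = \<rho>"
        using \<tau>_facts(5) by (auto simp: \<rho>_def)
      then show ?thesis
        by simp
    qed
  qed simp
  moreover have "sym_trop_singular A {a, b, c} {d, e, g}"
    using range rows cols by (intro singular_3x3) auto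
  ultimately show False
    by contradiction
qed

lemma entry_zero_if_diag_pos_diag_zero:
  assumes i: "i < n" and k: "k < n" and ii: "0 < A i i" and kk: "A k k = 0"
  shows "A i k = 0"
proof (rule ccontr)
  assume "A i k \<noteq> 0"
  then have ik: "0 < A i k" and ki: "0 < A k i"
    using nonneg[OF i k] symm[OF i k] by auto
  obtain j where j: "j < n" "A i j = 0"
    using row_zero[OF i] by blast
  \<comment> \<open>rows \<open>i, k, j\<close> and columns \<open>j, k, i\<close> have the unique zero transversal \<open>(i,j), (k,k), (j,i)\<close>\<close>
  show False
    by (rule no_unique_zero_transversal[of i k j j k i])
      (use i k j ii kk ik ki symm[OF i j(1)] in auto)
qed

lemma pos_entry_trans_on_pos_diag:
  assumes i: "i < n" and j: "j < n" and k: "k < n"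
    and ii: "0 < A i i" and jj: "0 < A j j" and kk: "0 < A k k"
    and ij: "0 < A i j" and jk: "0 < A j k"
  shows "0 < A i k"
proof (rule ccontr)
  assume "\<not> 0 < A i k"
  then have ik: "A i k = 0" and ki: "A k i = 0"
    using nonneg[OF i k] symm[OF i k] by auto
  obtain l where l: "l < n" "A j l = 0"
    using row_zero[OF j] by blast
  \<comment> \<open>rows \<open>i, j, k\<close> and columns \<open>k, l, i\<close> have the unique zero transversal \<open>(i,k), (j,l), (k,i)\<close>\<close>
  show False
    by (rule no_unique_zero_transversal[of i j k k l i])
      (use i j k l ii jj kk ij jk ik ki symm[OF i j] in auto)
qed

lemma pos_diag_no_zero_triangle:
  assumes i: "i < n" and j: "j < n" and k: "k < n"
    and ii: "0 < A i i" and jj: "0 < A j j" and kk: "0 < A k k"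
    and ij: "A i j = 0" and jk: "A j k = 0" and ik: "A i k = 0"
  shows False
proof -
  have ijk: "distinct [i, j, k]"
    using ii jj kk ij jk ik by auto
  have ki: "A k i = 0"
    using symm[OF i k] ik by simp
  define \<rho> where "\<rho> x = (if x = i then j else if x = j then k else if x = k then i else undefined)"
    for x
  have "{j, k, i} = {i, j, k}"
    by auto
  then have \<rho>: "\<rho> \<in> bijs {i, j, k} {i, j, k}"
    using bijs_triple[OF ijk, of j k i] ijk unfolding \<rho>_def by simp
  \<comment> \<open>the two zero transversals are the two cyclic permutations, which give the same monomial\<close>
  have "monomial {i, j, k} \<tau> = monomial {i, j, k} \<rho>"
    if \<tau>: "\<tau> \<in> bijs {i, j, k} {i, j, k}" and \<tau>_zero: "\<forall>x\<in>{i, j, k}. A x (\<tau> x) = 0" for \<tau>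
  proof -
    note \<tau>_facts = bijs_tripleD[OF \<tau>]
    have "distinct [\<tau> i, \<tau> j, \<tau> k]"
      using \<tau>_facts(4) ijk by (auto simp: inj_on_def)
    moreover have "\<tau> i \<noteq> i" "\<tau> j \<noteq> j" "\<tau> k \<noteq> k"
      using \<tau>_zero ii jj kk by auto
    ultimately have "(\<tau> i = j \<and> \<tau> j = k \<and> \<tau> k = i) \<or> (\<tau> i = k \<and> \<tau> j = i \<and> \<tau> k = j)"
      using \<tau>_facts(1-3) by auto
    then show ?thesis
      using monomial_triple[OF ijk, of \<tau>] monomial_triple[OF ijk, of \<rho>] ijk
      by (auto simp: \<rho>_def insert_commute add_mset_commute)
  qed
  then have "\<not> sym_trop_singular A {i, j, k} {i, j, k}"
    using i j k ij jk ki ijk nonneg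
    by (intro not_sym_trop_singular_if_unique_zero_monomial[OF _ _ \<rho>]) (auto simp: \<rho>_def)
  moreover have "sym_trop_singular A {i, j, k} {i, j, k}"
    using i j k ijk by (intro singular_3x3) auto
  ultimately show False
    by contradiction
qed

definition bipartite_row :: "nat \<Rightarrow> bool" where
  "bipartite_row x \<longleftrightarrow> x < n \<and> A x x = 0 \<and> (\<exists>j<n. A x j \<noteq> 0)"

lemma bipartite_row_pos_neighbour:
  assumes a: "bipartite_row a" and b: "b < n" and ab: "0 < A a b"
  shows "bipartite_row b"
proof -
  have "a < n" and aa: "A a a = 0"
    using a by (auto simp: bipartite_row_def)
  then have ba: "A b a \<noteq> 0"
    using symm[OF _ b] ab by simp
  then have "\<not> 0 < A b b"
    using entry_zero_if_diag_pos_diag_zero[OF b \<open>a < n\<close> _ aa] by blast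
  then have "A b b = 0"
    using nonneg[OF b b] by simp
  then show ?thesis
    unfolding bipartite_row_def using b \<open>a < n\<close> ba by blast
qed

lemma zero_diag_no_pos_triangle:
  assumes a: "a < n" and b: "b < n" and c: "c < n"
    and aa: "A a a = 0" and bb: "A b b = 0" and cc: "A c c = 0"
    and ab: "0 < A a b" and bc: "0 < A b c" and ac: "0 < A a c"
  shows False
proof -
  have "0 < A b a" "0 < A c b" "0 < A c a"
    using symm a b c ab bc ac by auto
  then show False
    by (intro no_unique_zero_transversal[of a b c a b c]) (use a b c aa bb cc ab bc ac in auto)
qed

lemma zero_diag_pos_path_closes:
  assumes a: "a < n" and b: "b < n" and c: "c < n" and d: "d < n"
    and aa: "A a a = 0" and bb: "A b b = 0" and cc: "A c c = 0" and dd: "A d d = 0"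
    and ab: "0 < A a b" and bc: "0 < A b c" and cd: "0 < A c d"
  shows "0 < A a d"
proof (cases "a = c \<or> b = d \<or> a = d")
  case True
  then consider "a = c" | "b = d" | "a = d"
    by blast
  then show ?thesis
  proof cases
    case 3
    then show ?thesis
      using zero_diag_no_pos_triangle[OF a b c aa bb cc ab bc] symm[OF c d] cd by simp
  qed (use ab cd in simp_all)
next
  case False
  have ac: "A a c = 0" and ca: "A c a = 0"
    using zero_diag_no_pos_triangle[OF a b c aa bb cc ab bc] nonneg[OF a c] symm[OF a c] by force+
  have bd: "A b d = 0"
    using zero_diag_no_pos_triangle[OF b c d bb cc dd bc cd] nonneg[OF b d] by force
  show ?thesis
  proof (rule ccontr)
    assume "\<not> 0 < A a d"
    then have ad: "A a d = 0"
      using nonneg[OF a d] by simp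
    have "0 < A c b"
      using symm[OF b c] bc by simp
    \<comment> \<open>rows \<open>a, b, c\<close> and columns \<open>d, b, a\<close> have the unique zero transversal \<open>(a,d), (b,b), (c,a)\<close>\<close>
    then show False
      by (intro no_unique_zero_transversal[of a b c d b a])
        (use a b c d False aa bb cc dd ab bc cd ac bd ca ad in auto)
  qed
qed

text \<open>\<open>min_side a\<close>: some vertex at distance two from \<open>a\<close> precedes all neighbours of \<open>a\<close>,
  i.e. \<open>a\<close> lies on the side of its complete bipartite component containing the least vertex.\<close>

definition min_side :: "nat \<Rightarrow> bool" where
  "min_side a \<longleftrightarrow> (\<exists>c<n. (\<exists>b<n. 0 < A a b \<and> 0 < A b c) \<and> (\<forall>b<n. 0 < A a b \<longrightarrow> c < b))"

lemma pos_path2_iff_pos_neighbour_entry: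
  assumes x: "bipartite_row x" and y: "y < n" and xy: "0 < A x y" and c: "c < n"
  shows "(\<exists>b<n. 0 < A x b \<and> 0 < A b c) \<longleftrightarrow> 0 < A y c"
proof
  assume "\<exists>b<n. 0 < A x b \<and> 0 < A b c"
  then obtain b where b: "b < n" "0 < A x b" "0 < A b c"
    by blast
  have "x < n" and xx: "A x x = 0"
    using x by (auto simp: bipartite_row_def)
  have b_row: "bipartite_row b"
    using bipartite_row_pos_neighbour[OF x b(1,2)] .
  have "A y y = 0" "A b b = 0" "A c c = 0"
    using bipartite_row_pos_neighbour[OF x y xy] b_row bipartite_row_pos_neighbour[OF b_row c b(3)]
    by (auto simp: bipartite_row_def)
  then show "0 < A y c"
    using zero_diag_pos_path_closes[OF y \<open>x < n\<close> b(1) c _ xx] symm[OF \<open>x < n\<close> y] xy b(2,3) by simp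
next
  assume "0 < A y c"
  then show "\<exists>b<n. 0 < A x b \<and> 0 < A b c"
    using y xy by blast
qed

lemma min_side_pos_neighbour:
  assumes a: "bipartite_row a" and b: "b < n" and ab: "0 < A a b"
  shows "min_side a \<longleftrightarrow> \<not> min_side b"
proof -
  have "a < n" and aa: "A a a = 0"
    using a by (auto simp: bipartite_row_def)
  have b_row: "bipartite_row b"
    using bipartite_row_pos_neighbour[OF a b ab] .
  then have bb: "A b b = 0"
    by (simp add: bipartite_row_def)
  have ba: "0 < A b a"
    using symm[OF \<open>a < n\<close> b] ab by simp
  define X where "X = {y. y < n \<and> 0 < A b y}"
  define Y where "Y = {y. y < n \<and> 0 < A a y}"
  have min_side_a: "min_side a \<longleftrightarrow> (\<exists>c\<in>X. \<forall>y\<in>Y. c < y)"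
    unfolding min_side_def X_def Y_def using pos_path2_iff_pos_neighbour_entry[OF a b ab] by auto
  have min_side_b: "min_side b \<longleftrightarrow> (\<exists>c\<in>Y. \<forall>y\<in>X. c < y)"
    unfolding min_side_def X_def Y_def
    using pos_path2_iff_pos_neighbour_entry[OF b_row \<open>a < n\<close> ba] by auto
  have "X \<inter> Y = {}"
  proof (rule ccontr)
    assume "X \<inter> Y \<noteq> {}"
    then obtain y where y: "y < n" "0 < A b y" "0 < A a y"
      unfolding X_def Y_def by blast
    have "A y y = 0"
      using bipartite_row_pos_neighbour[OF a y(1) y(3)] by (simp add: bipartite_row_def)
    then show False
      using zero_diag_no_pos_triangle[OF \<open>a < n\<close> b y(1) aa bb _ ab y(2,3)] by simp
  qed
  moreover have "X \<union> Y \<noteq> {}"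
    using b ab unfolding Y_def by blast
  ultimately show ?thesis
    using ex_less_all_iff_not_ex_less_all[of X Y] min_side_a min_side_b
    unfolding X_def Y_def by auto
qed

definition least_pos_diag :: nat where
  "least_pos_diag = (LEAST p. p < n \<and> 0 < A p p)"

lemma least_pos_diagI:
  assumes "x < n" "0 < A x x"
  shows "least_pos_diag < n" "0 < A least_pos_diag least_pos_diag"
  using LeastI[of "\<lambda>p. p < n \<and> 0 < A p p", OF conjI[OF assms]] by (simp_all add: least_pos_diag_def)

text \<open>The blocks are numbered as in \<^const>\<open>blk\<close>: \<open>B\<^sub>1\<close> is the positivity class of
  \<^const>\<open>least_pos_diag\<close>, and the rows of \<open>C\<close> are those on the \<^const>\<open>min_side\<close>.\<close>

definition block_index :: "nat \<Rightarrow> nat" where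
  "block_index x =
    (if \<forall>j<n. A x j = 0 then 0
     else if 0 < A x x then (if 0 < A x least_pos_diag then 1 else 2)
     else if min_side x then 3 else 4)"

lemma block_index_le: "block_index x \<le> 4"
  by (simp add: block_index_def)

lemma block_index_eq_iff:
  assumes "x < n"
  shows "block_index x = 0 \<longleftrightarrow> (\<forall>j<n. A x j = 0)"
    and "block_index x = 1 \<longleftrightarrow> 0 < A x x \<and> 0 < A x least_pos_diag"
    and "block_index x = 2 \<longleftrightarrow> 0 < A x x \<and> \<not> 0 < A x least_pos_diag"
    and "block_index x = 3 \<longleftrightarrow> bipartite_row x \<and> min_side x"
    and "block_index x = 4 \<longleftrightarrow> bipartite_row x \<and> \<not> min_side x"
  using assms nonneg[OF assms assms] by (auto simp: block_index_def bipartite_row_def)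

lemma pos_diag_iff_block_index_1_2:
  assumes "x < n"
  shows "0 < A x x \<longleftrightarrow> block_index x \<in> {1, 2}"
  using assms by (auto simp: block_index_def)

lemma pos_within_block_1:
  assumes x: "x < n" and y: "y < n" and "block_index x = 1" "block_index y = 1"
  shows "0 < A x y"
proof -
  have xx: "0 < A x x" and xp: "0 < A x least_pos_diag"
    and yy: "0 < A y y" and yp: "0 < A y least_pos_diag"
    using assms block_index_eq_iff(2)[OF x] block_index_eq_iff(2)[OF y] by simp_all
  note p = least_pos_diagI[OF x xx]
  have "0 < A least_pos_diag y"
    using yp symm[OF y p(1)] by simp
  then show ?thesis
    using pos_entry_trans_on_pos_diag[OF x p(1) y xx p(2) yy xp] by simp
qed

lemma pos_within_block_2:
  assumes x: "x < n" and y: "y < n" and "block_index x = 2" "block_index y = 2"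
  shows "0 < A x y"
proof (rule ccontr)
  assume "\<not> 0 < A x y"
  then have xy: "A x y = 0"
    using nonneg[OF x y] by simp
  have xx: "0 < A x x" and yy: "0 < A y y" and "\<not> 0 < A x least_pos_diag" "\<not> 0 < A y least_pos_diag"
    using assms block_index_eq_iff(3)[OF x] block_index_eq_iff(3)[OF y] by simp_all
  note p = least_pos_diagI[OF x xx]
  have "A x least_pos_diag = 0" "A y least_pos_diag = 0"
    using \<open>\<not> 0 < A x least_pos_diag\<close> \<open>\<not> 0 < A y least_pos_diag\<close> nonneg[OF x p(1)] nonneg[OF y p(1)]
    by simp_all
  then show False
    using pos_diag_no_zero_triangle[OF x y p(1) xx yy p(2) xy] by simp
qed

lemma zero_between_blocks_1_2:
  assumes x: "x < n" and y: "y < n" and "block_index x = 1" "block_index y = 2"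
  shows "A x y = 0"
proof (rule ccontr)
  assume "A x y \<noteq> 0"
  then have yx: "0 < A y x"
    using nonneg[OF x y] symm[OF x y] by simp
  have xx: "0 < A x x" and xp: "0 < A x least_pos_diag" and yy: "0 < A y y"
    and yp: "\<not> 0 < A y least_pos_diag"
    using assms block_index_eq_iff(2)[OF x] block_index_eq_iff(3)[OF y] by simp_all
  note p = least_pos_diagI[OF x xx]
  show False
    using pos_entry_trans_on_pos_diag[OF y x p(1) yy xx p(2) yx xp] yp by simp
qed

lemma zero_within_block_3_4:
  assumes x: "x < n" and y: "y < n" and "block_index x = block_index y" "block_index x \<in> {3, 4}"
  shows "A x y = 0"
proof (rule ccontr)
  assume "A x y \<noteq> 0"
  then have "0 < A x y"
    using nonneg[OF x y] by simp
  moreover have "bipartite_row x" "min_side x \<longleftrightarrow> min_side y"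
    using assms block_index_eq_iff(4,5)[OF x] block_index_eq_iff(4,5)[OF y] by auto
  ultimately show False
    using min_side_pos_neighbour[OF _ y] by blast
qed

lemma entry_zero_outside_blocks:
  assumes x: "x < n" and y: "y < n"
    and not_B: "\<not> (block_index x = block_index y \<and> block_index x \<in> {1, 2})"
    and not_C: "\<not> (block_index x = 3 \<and> block_index y = 4)" "\<not> (block_index x = 4 \<and> block_index y = 3)"
  shows "A x y = 0"
proof -
  consider "block_index x = 0" | "block_index y = 0"
    | "block_index x \<in> {1, 2}" "block_index y \<in> {1, 2}"
    | "block_index x \<in> {1, 2} \<longleftrightarrow> block_index y \<notin> {1, 2}" "block_index x \<noteq> 0" "block_index y \<noteq> 0"
    | "block_index x \<in> {3, 4}" "block_index y \<in> {3, 4}"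
    using block_index_le[of x] block_index_le[of y] by fastforce
  then show ?thesis
  proof cases
    case 1
    then show ?thesis
      using x y by (simp add: block_index_eq_iff)
  next
    case 2
    then show ?thesis
      using x y symm[OF x y] by (simp add: block_index_eq_iff)
  next
    case 3
    then show ?thesis
      using not_B zero_between_blocks_1_2[OF x y] zero_between_blocks_1_2[OF y x] symm[OF x y]
      by auto
  next
    case 4
    then show ?thesis
      using pos_diag_iff_block_index_1_2[OF x] pos_diag_iff_block_index_1_2[OF y]
        nonneg[OF x x] nonneg[OF y y] symm[OF x y]
        entry_zero_if_diag_pos_diag_zero[OF x y] entry_zero_if_diag_pos_diag_zero[OF y x]
      by (cases "block_index x \<in> {1, 2}") auto
  next
    case 5
    then show ?thesis
      using not_C zero_within_block_3_4[OF x y] by auto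
  qed
qed

lemma block_index_entry:
  assumes x: "x < n" and y: "y < n"
  shows "let bi = block_index x; bj = block_index y in
    if (bi = 1 \<and> bj = 1) \<or> (bi = 2 \<and> bj = 2) then 0 < A x y
    else if bi = 3 \<and> bj = 4 then 0 \<le> A x y \<and> A y x = A x y
    else if bi = 4 \<and> bj = 3 then 0 \<le> A x y
    else A x y = 0"
  using pos_within_block_1[OF x y] pos_within_block_2[OF x y] entry_zero_outside_blocks[OF x y]
    nonneg[OF x y] symm[OF x y]
  by (auto simp: Let_def)

lemma block_index_4_has_nonzero_3_entry:
  assumes y: "y < n" and "block_index y = 4"
  shows "\<exists>x<n. block_index x = 3 \<and> A x y \<noteq> 0"
proof -
  have y_row: "bipartite_row y" and "\<not> min_side y"
    using assms block_index_eq_iff(5)[OF y] by simp_all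
  then obtain x where x: "x < n" "A y x \<noteq> 0"
    by (auto simp: bipartite_row_def)
  then have yx: "0 < A y x"
    using nonneg[OF y x(1)] by simp
  have "bipartite_row x" "min_side x"
    using bipartite_row_pos_neighbour[OF y_row x(1) yx] min_side_pos_neighbour[OF y_row x(1) yx]
      \<open>\<not> min_side y\<close> by simp_all
  then have "block_index x = 3"
    using block_index_eq_iff(4)[OF x(1)] by simp
  moreover have "A x y \<noteq> 0"
    using symm[OF x(1) y] x(2) by simp
  ultimately show ?thesis
    using x(1) by blast
qed

lemma sym_block_form_by_block_index:
  assumes \<sigma>: "bij_betw \<sigma> {..<n} {..<n}" and sizes: "k0 + k1 + k2 + k3 + k4 = n"
    and blk_\<sigma>: "\<forall>i<n. blk k0 k1 k2 k3 i = block_index (\<sigma> i)"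
  shows "sym_block_form n (\<lambda>i j. A (\<sigma> i) (\<sigma> j)) k0 k1 k2 k3 k4"
  unfolding sym_block_form_def
proof (intro conjI allI impI)
  have \<sigma>_range: "\<sigma> i < n" if "i < n" for i
    using bij_betw_apply[OF \<sigma>] that by auto
  show "k0 + k1 + k2 + k3 + k4 = n"
    by (fact sizes)
  show "let bi = blk k0 k1 k2 k3 i; bj = blk k0 k1 k2 k3 j in
      if (bi = 1 \<and> bj = 1) \<or> (bi = 2 \<and> bj = 2) then 0 < A (\<sigma> i) (\<sigma> j)
      else if bi = 3 \<and> bj = 4 then 0 \<le> A (\<sigma> i) (\<sigma> j) \<and> A (\<sigma> j) (\<sigma> i) = A (\<sigma> i) (\<sigma> j)
      else if bi = 4 \<and> bj = 3 then 0 \<le> A (\<sigma> i) (\<sigma> j)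
      else A (\<sigma> i) (\<sigma> j) = 0" if "i < n" "j < n" for i j
    using block_index_entry[OF \<sigma>_range \<sigma>_range, OF that] blk_\<sigma> that by simp
  show "\<exists>i. k0 + k1 + k2 \<le> i \<and> i < k0 + k1 + k2 + k3 \<and> A (\<sigma> i) (\<sigma> j) \<noteq> 0"
    if j: "k0 + k1 + k2 + k3 \<le> j \<and> j < n" for j
  proof -
    have "block_index (\<sigma> j) = 4"
      using blk_\<sigma> j by (auto simp: blk_def)
    then obtain x where x: "x < n" "block_index x = 3" "A x (\<sigma> j) \<noteq> 0"
      using block_index_4_has_nonzero_3_entry \<sigma>_range j by blast
    then obtain i where i: "i < n" "\<sigma> i = x"
      using bij_betw_imp_surj_on[OF \<sigma>] by (metis imageE lessThan_iff)
    then have "blk k0 k1 k2 k3 i = 3"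
      using blk_\<sigma> x(2) by simp
    then have "k0 + k1 + k2 \<le> i \<and> i < k0 + k1 + k2 + k3"
      by (auto simp: blk_def split: if_splits)
    then show ?thesis
      using i x(3) by blast
  qed
qed

end

lemma blk_permutation_exists:
  fixes f :: "nat \<Rightarrow> nat"
  assumes f_le: "\<forall>x<n. f x \<le> 4"
  shows "\<exists>\<sigma> k0 k1 k2 k3 k4. bij_betw \<sigma> {..<n} {..<n} \<and> k0 + k1 + k2 + k3 + k4 = n \<and>
    (\<forall>i<n. blk k0 k1 k2 k3 i = f (\<sigma> i))"
proof -
  define l where "l t = sorted_list_of_set {x. x < n \<and> f x = t}" for t
  define L where "L = l 0 @ l 1 @ l 2 @ l 3 @ l 4"
  define k where "k t = length (l t)" for t
  have set_l: "set (l t) = {x. x < n \<and> f x = t}" and distinct_l: "distinct (l t)" for t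
    unfolding l_def by auto
  have "distinct L"
    unfolding L_def using set_l distinct_l by auto
  moreover have "set L = {..<n}"
    unfolding L_def using set_l f_le by force
  ultimately have length_L: "length L = n"
    using distinct_card by fastforce
  have "bij_betw ((!) L) {..<n} {..<n}"
    by (rule bij_betw_nth) (use \<open>distinct L\<close> \<open>set L = {..<n}\<close> length_L in auto)
  moreover have sizes: "k 0 + k 1 + k 2 + k 3 + k 4 = n"
    using length_L unfolding L_def k_def by simp
  moreover have "blk (k 0) (k 1) (k 2) (k 3) i = f (L ! i)" if "i < n" for i
  proof -
    have "f (l t ! j) = t" if "j < k t" for t j
      using that set_l nth_mem unfolding k_def by blast
    moreover have "i < k 0 + k 1 + k 2 + k 3 + k 4"
      using \<open>i < n\<close> sizes by simp
    ultimately show ?thesis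
      unfolding blk_def L_def by (auto simp: nth_append k_def[symmetric] algebra_simps)
  qed
  ultimately show ?thesis
    by blast
qed

lemma sym_trop_singular_if_rank_less:
  assumes "sym_trop_rank n A < r" "I \<subseteq> {..<n}" "J \<subseteq> {..<n}" "card I = r" "card J = r"
  shows "sym_trop_singular A I J"
  using sym_trop_rank_ge[OF assms(2-5), of A] assms(1) by (metis not_le)

theorem lemma4:
  fixes n :: nat and A :: "nat \<Rightarrow> nat \<Rightarrow> real"
  assumes symm: "\<forall>i<n. \<forall>j<n. A i j = A j i"
    and row_min: "\<forall>i<n. (\<forall>j<n. A i j \<ge> 0) \<and> (\<exists>j<n. A i j = 0)"
    and col_min: "\<forall>j<n. (\<forall>i<n. A i j \<ge> 0) \<and> (\<exists>i<n. A i j = 0)"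
    and rank2: "sym_trop_rank n A = 2"
  shows "(\<exists>\<sigma> k0 k1 k2 k3 k4. bij_betw \<sigma> {..<n} {..<n} \<and>
            sym_block_form n (\<lambda>i j. A (\<sigma> i) (\<sigma> j)) k0 k1 k2 k3 k4)
         \<and> (\<exists>i<n. \<exists>j<n. A i j \<noteq> 0)
         \<and> \<not> (\<forall>i<n. \<forall>j<n. A i j > 0)"
proof -
  interpret normalized_sym_rank_le_2 n A
    using symm row_min sym_trop_singular_if_rank_less[of n A 3] rank2 by unfold_locales auto
  obtain \<sigma> k0 k1 k2 k3 k4 where "bij_betw \<sigma> {..<n} {..<n}" "k0 + k1 + k2 + k3 + k4 = n"
    "\<forall>i<n. blk k0 k1 k2 k3 i = block_index (\<sigma> i)"
    using blk_permutation_exists[of n block_index] block_index_le by blast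
  then have block_form: "sym_block_form n (\<lambda>i j. A (\<sigma> i) (\<sigma> j)) k0 k1 k2 k3 k4"
    by (rule sym_block_form_by_block_index)
  obtain I J where IJ: "I \<subseteq> {..<n}" "J \<subseteq> {..<n}" "card I = 2" "card J = 2"
    "\<not> sym_trop_singular A I J"
    using sym_trop_rank_attained[of n A] rank2 by auto
  then have nonzero: "\<exists>i<n. \<exists>j<n. A i j \<noteq> 0"
    using sym_trop_singular_zero_2x2[of I J A] by blast
  have "0 < n"
    using card_mono[OF finite_lessThan IJ(1)] IJ(3) by simp
  then have "\<not> (\<forall>i<n. \<forall>j<n. A i j > 0)"
    using row_min by force
  then show ?thesis
    using \<open>bij_betw \<sigma> {..<n} {..<n}\<close> block_form nonzero by blast
qed

end
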